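(* Let $n\ge1$ and $0\le k\le n$. There exists a nonempty finite multiset $\{\mathcal{B}_1,\dots,\mathcal{B}_s\}$ of quadratic monomial bases of $Z_k$ which is $X$-balanced, i.e. such that, counting each monomial $x_ax_b$ in each $\mathcal{B}_\ell$ with the exponents of its variables and summing over $\ell=1,\dots,s$, every variable $x_0,\dots,x_n$ occurs the same total number of times.
   Context: Let $x_i:=z^i$ for $0\le i\le n$, and $Z_k:=\operatorname{span}\{z^i: k\le i\le 2n-k\}\subset\mathbb{C}[z]$. A quadratic monomial basis of $Z_k$ is a set of monomials $x_ax_b$ ($0\le a\le b\le n$) whose images $z^{a+b}$ form a basis of $Z_k$, i.e. the map $x_ax_b\mapsto a+b$ is a bijection from the set onto $\{k,k+1,\dots,2n-k\}$. *)

theory Defs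
  imports Main "HOL-Library.Multiset"
begin

text \<open>A monomial x_a x_b (0 <= a <= b <= n) is encoded as the pair (a,b) with a <= b.
  Its image in C[z] is z^(a+b).\<close>

definition quad_mon_basis :: "nat \<Rightarrow> nat \<Rightarrow> (nat \<times> nat) set \<Rightarrow> bool" where
  "quad_mon_basis n k B \<longleftrightarrow>
     (\<forall>(a, b) \<in> B. a \<le> b \<and> b \<le> n) \<and>
     bij_betw (\<lambda>(a, b). a + b) B {k..2 * n - k}"

definition var_occ :: "nat \<Rightarrow> nat \<times> nat \<Rightarrow> nat" where
  "var_occ i p = (if fst p = i then 1 else 0) + (if snd p = i then 1 else 0)"

definition total_occ :: "nat \<Rightarrow> (nat \<times> nat) set multiset \<Rightarrow> nat" where
  "total_occ i M = (\<Sum>B\<in>#M. \<Sum>p\<in>B. var_occ i p)"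

definition X_balanced :: "nat \<Rightarrow> (nat \<times> nat) set multiset \<Rightarrow> bool" where
  "X_balanced n M \<longleftrightarrow> (\<forall>i\<le>n. \<forall>j\<le>n. total_occ i M = total_occ j M)"

end

theory Submission
  imports Defs
begin

(*
  Write occ i B for the number of occurrences of x_i in the monomials of a basis B, and call a
  multiset M of bases of Z_k (for the variables x_0..x_n) a balanced family of weight t > 0 if
  every variable occurs exactly t times in M.  Such families are constructed by strong induction
  on n, with m = n - k:

  * k = 0: the hook basis {x_0 x_d | d <= n} u {x_(d-n) x_n | d > n} together with n copies of
    the diagonal basis {x_(d div 2) x_(d - d div 2)} has weight 4n + 2.
  * Lifting: the maps (a,b) |-> (a, b + c) and (a,b) |-> (b, a + c) send bases of Z_K in the
    variables x_0..x_N to bases of Z_(K+c) in x_0..x_(N+c); applied to a balanced family they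
    cover x_0..x_N and x_c..x_(N+c) equally often.
  * 2k > n: lifting families for (m, 0) by k and for (k-1, k-1-m) by m+1 covers every variable
    exactly twice in total.
  * 1 <= k, 2k <= n: the hooks H_j (j < k), using x_j for the degrees k..n and x_(n-j) for the
    degrees n+1..2n-k, taken n - 2j times each, cover the outer variables (m+1)n times and the
    middle ones x_k..x_m only 2k(m+1) times; a multiple of the lift of a family for (m, 0)
    makes up the difference.
*)

definition sort2 :: "nat \<times> nat \<Rightarrow> nat \<times> nat" where
  "sort2 p = (min (fst p) (snd p), max (fst p) (snd p))"

lemma var_occ_sort2 [simp]: "var_occ i (sort2 p) = var_occ i p"
  unfolding var_occ_def sort2_def by (auto simp: min_def max_def)

definition occ :: "nat \<Rightarrow> (nat \<times> nat) set \<Rightarrow> nat" where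
  "occ i B = (\<Sum>p\<in>B. var_occ i p)"

lemma total_occ_eq: "total_occ i M = (\<Sum>B\<in>#M. occ i B)"
  by (simp add: total_occ_def occ_def)

lemma total_occ_empty [simp]: "total_occ i {#} = 0"
  by (simp add: total_occ_eq)

lemma total_occ_plus [simp]: "total_occ i (M + N) = total_occ i M + total_occ i N"
  by (simp add: total_occ_eq)

lemma total_occ_add_mset [simp]: "total_occ i (add_mset B M) = occ i B + total_occ i M"
  by (simp add: total_occ_eq)

lemma total_occ_replicate [simp]: "total_occ i (replicate_mset c B) = c * occ i B"
  by (simp add: total_occ_eq)

lemma total_occ_repeat [simp]: "total_occ i (repeat_mset c M) = c * total_occ i M"
  by (induction c) auto

lemma in_repeat_mset [simp]: "x \<in># repeat_mset c M \<longleftrightarrow> 0 < c \<and> x \<in># M"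
  by (simp only: count_greater_zero_iff[symmetric] count_repeat_mset) simp

lemma total_occ_sum: "total_occ i (\<Sum>j\<in>J. F j) = (\<Sum>j\<in>J. total_occ i (F j))"
  by (induction J rule: infinite_finite_induct) (auto simp: total_occ_eq)

lemma quad_mon_basis_iff:
  "quad_mon_basis N K B \<longleftrightarrow>
     (\<forall>p\<in>B. fst p \<le> snd p \<and> snd p \<le> N) \<and>
     inj_on (\<lambda>p. fst p + snd p) B \<and> (\<lambda>p. fst p + snd p) ` B = {K..2*N-K}"
  unfolding quad_mon_basis_def bij_betw_def by (simp add: case_prod_beta')

lemma section_basis:
  assumes s: "\<And>d. d \<in> {K..2*N-K} \<Longrightarrow>
      fst (s d) \<le> snd (s d) \<and> snd (s d) \<le> N \<and> fst (s d) + snd (s d) = d"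
  shows "quad_mon_basis N K (s ` {K..2*N-K})"
    and "occ i (s ` {K..2*N-K}) = (\<Sum>d\<in>{K..2*N-K}. var_occ i (s d))"
proof -
  have inj: "inj_on s {K..2*N-K}"
    by (rule inj_onI) (metis s)
  then show "occ i (s ` {K..2*N-K}) = (\<Sum>d\<in>{K..2*N-K}. var_occ i (s d))"
    by (simp add: occ_def sum.reindex)
  have "inj_on (\<lambda>p. fst p + snd p) (s ` {K..2*N-K})"
    by (rule inj_onI) (metis (no_types, lifting) imageE s)
  moreover have "(\<lambda>p. fst p + snd p) ` s ` {K..2*N-K} = {K..2*N-K}"
    by (force simp: image_image s)
  ultimately show "quad_mon_basis N K (s ` {K..2*N-K})"
    unfolding quad_mon_basis_iff using s by auto
qed

(* Mapping every monomial of a basis to one of degree c higher (injectively, since the degree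
   determines the monomial) gives a basis of Z_(K+c) in the variables x_0..x_(N+c). *)
lemma shifted_basis:
  assumes B: "quad_mon_basis N K B" and KN: "K \<le> N"
    and g: "\<And>p. p \<in> B \<Longrightarrow>
      fst (g p) \<le> snd (g p) \<and> snd (g p) \<le> N + c \<and> fst (g p) + snd (g p) = fst p + snd p + c"
  shows "quad_mon_basis (N + c) (K + c) (g ` B)"
    and "occ i (g ` B) = (\<Sum>p\<in>B. var_occ i (g p))"
proof -
  have inj_deg: "inj_on (\<lambda>p. fst p + snd p) B"
    and deg: "(\<lambda>p. fst p + snd p) ` B = {K..2*N-K}"
    using B by (auto simp: quad_mon_basis_iff)
  have inj: "inj_on g B"
    by (rule inj_onI) (metis (no_types, lifting) g inj_deg inj_onD add_right_cancel)
  then show "occ i (g ` B) = (\<Sum>p\<in>B. var_occ i (g p))"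
    by (simp add: occ_def sum.reindex)
  have "inj_on (\<lambda>p. fst p + snd p) (g ` B)"
    by (rule inj_onI) (metis (no_types, lifting) g imageE inj_deg inj_onD add_right_cancel)
  moreover have "(\<lambda>p. fst p + snd p) ` g ` B = (\<lambda>d. d + c) ` {K..2*N-K}"
    unfolding deg[symmetric] image_image by (rule image_cong) (auto simp: g)
  moreover have "(\<lambda>d. d + c) ` {K..2*N-K} = {K + c..2*(N + c) - (K + c)}"
    using KN by (simp add: add.commute)
  ultimately show "quad_mon_basis (N + c) (K + c) (g ` B)"
    unfolding quad_mon_basis_iff using g by auto
qed

lemma quad_mon_basis_elem:
  "quad_mon_basis N K B \<Longrightarrow> p \<in> B \<Longrightarrow> fst p \<le> snd p \<and> snd p \<le> N"
  by (simp add: quad_mon_basis_iff)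

lemma sum_indicator: "finite A \<Longrightarrow> (\<Sum>d\<in>A. of_bool (d = x)) = (of_bool (x \<in> A) :: nat)"
  by (simp add: of_bool_def)

definition hook_pair :: "nat \<Rightarrow> nat \<Rightarrow> nat \<Rightarrow> nat \<times> nat" where
  "hook_pair n j d = sort2 (if d \<le> n then (j, d - j) else (d - n + j, n - j))"

definition hook :: "nat \<Rightarrow> nat \<Rightarrow> nat \<Rightarrow> (nat \<times> nat) set" where
  "hook n k j = hook_pair n j ` {k..2*n-k}"

lemma hook_pair_section:
  "j \<le> k \<Longrightarrow> k \<le> n \<Longrightarrow> d \<in> {k..2*n-k} \<Longrightarrow>
     fst (hook_pair n j d) \<le> snd (hook_pair n j d) \<and> snd (hook_pair n j d) \<le> n
     \<and> fst (hook_pair n j d) + snd (hook_pair n j d) = d"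
  by (auto simp: hook_pair_def sort2_def)

lemma hook_basis: "j \<le> k \<Longrightarrow> k \<le> n \<Longrightarrow> quad_mon_basis n k (hook n k j)"
  unfolding hook_def by (rule section_basis(1)) (rule hook_pair_section)

(* Exact occurrence counts in H_j: x_j comes with m+1 degrees, x_(n-j) with m further ones. *)
lemma occ_hook:
  assumes jk: "j \<le> k" and kn: "k \<le> n"
  shows "occ i (hook n k j) = (n - k + 1) * of_bool (i = j) + of_bool (k \<le> i + j \<and> i + j \<le> n)
           + of_bool (j < i \<and> i \<le> j + (n - k)) + (n - k) * of_bool (i + j = n)"
proof -
  have split: "{k..2*n-k} = {k..n} \<union> {Suc n..2*n-k}" and "{k..n} \<inter> {Suc n..2*n-k} = {}"
    using kn by auto
  have low: "(\<Sum>d\<in>{k..n}. var_occ i (j, d - j)) = (\<Sum>d\<in>{k..n}. of_bool (i = j) + of_bool (d = i + j))"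
    by (rule sum.cong) (use jk in \<open>auto simp: var_occ_def\<close>)
  have high: "(\<Sum>d\<in>{Suc n..2*n-k}. var_occ i (d - n + j, n - j))
      = (\<Sum>d\<in>{Suc n..2*n-k}. of_bool (j < i \<and> d = n + i - j) + of_bool (i + j = n))"
    by (rule sum.cong) (use jk kn in \<open>auto simp: var_occ_def\<close>)
  have "occ i (hook n k j)
      = (\<Sum>d\<in>{k..2*n-k}. var_occ i (if d \<le> n then (j, d - j) else (d - n + j, n - j)))"
    using section_basis(2)[OF hook_pair_section[OF jk kn]] by (simp add: hook_def hook_pair_def)
  also have "\<dots> = (\<Sum>d\<in>{k..n}. var_occ i (j, d - j))
      + (\<Sum>d\<in>{Suc n..2*n-k}. var_occ i (d - n + j, n - j))"
    unfolding split by (simp add: sum.union_disjoint \<open>{k..n} \<inter> {Suc n..2*n-k} = {}\<close>)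
  also have "\<dots> = (n - k + 1) * of_bool (i = j) + of_bool (k \<le> i + j \<and> i + j \<le> n)
           + of_bool (j < i \<and> i \<le> j + (n - k)) + (n - k) * of_bool (i + j = n)"
    unfolding low high sum.distrib sum_indicator[OF finite_atLeastAtMost]
    using kn jk by (auto simp: of_bool_def)
  finally show ?thesis .
qed

lemma occ_hook_reflect:
  assumes jk: "j \<le> k" and kn: "k \<le> n" and "i \<le> n"
  shows "occ (n - i) (hook n k j) = occ i (hook n k j)"
proof -
  have "of_bool (n - i = j) = (of_bool (i + j = n) :: nat)"
    and "of_bool (n - i + j = n) = (of_bool (i = j) :: nat)"
    and "of_bool (k \<le> n - i + j \<and> n - i + j \<le> n)
           = of_bool (i = j) + (of_bool (j < i \<and> i \<le> j + (n - k)) :: nat)"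
    and "of_bool (k \<le> i + j \<and> i + j \<le> n)
           = of_bool (j < n - i \<and> n - i \<le> j + (n - k)) + (of_bool (i + j = n) :: nat)"
    using assms by auto
  then show ?thesis
    unfolding occ_hook[OF jk kn] by simp
qed

lemma occ_hook_low:
  assumes "2 * k \<le> n" "j < k" "2 * i \<le> n"
  shows "occ i (hook n k j) = (n - k + 1) * of_bool (i = j) + of_bool (k \<le> i + j) + of_bool (j < i)"
proof -
  have "i + j \<le> n" "i \<le> j + (n - k)" "i + j \<noteq> n"
    using assms by linarith+
  then show ?thesis
    using assms by (simp add: occ_hook)
qed

(* Pairing H_j with H_(k-1-j): the weights n - 2j and n - 2(k-1-j) add up to 2(m+1). *)
lemma hook_weights_pairing:
  fixes n k i :: nat
  assumes "2 * k \<le> n"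
  shows "(\<Sum>j<k. (n - 2*j) * (of_bool (k \<le> i + j) + of_bool (j < i))) = 2 * (n - k + 1) * min i k"
proof -
  have "(\<Sum>j<k. (n - 2*j) * of_bool (k \<le> i + j)) = (\<Sum>j<k. (n - 2*(k - Suc j)) * of_bool (j < i))"
    by (subst sum.nat_diff_reindex[symmetric]) (rule sum.cong, auto)
  then have "(\<Sum>j<k. (n - 2*j) * (of_bool (k \<le> i + j) + of_bool (j < i)))
      = (\<Sum>j<k. ((n - 2*j) + (n - 2*(k - Suc j))) * of_bool (j < i))"
    by (simp add: distrib_left distrib_right sum.distrib)
  also have "\<dots> = (\<Sum>j<k. 2 * (n - k + 1) * of_bool (j < i))"
    by (rule sum.cong) (use assms in auto)
  also have "\<dots> = 2 * (n - k + 1) * (\<Sum>j<k. of_bool (j < i))"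
    by (rule sum_distrib_left[symmetric])
  also have "(\<Sum>j<k. of_bool (j < i)) = min i k"
  proof -
    have "{..<k} \<inter> {j. j < i} = {..<min i k}"
      by auto
    then show ?thesis
      by simp
  qed
  finally show ?thesis .
qed

definition hooks :: "nat \<Rightarrow> nat \<Rightarrow> (nat \<times> nat) set multiset" where
  "hooks n k = (\<Sum>j<k. replicate_mset (n - 2*j) (hook n k j))"

lemma hooks_bases: "k \<le> n \<Longrightarrow> B \<in># hooks n k \<Longrightarrow> quad_mon_basis n k B"
  by (auto simp: hooks_def set_mset_sum hook_basis split: if_splits)

lemma total_occ_hooks_eq: "total_occ i (hooks n k) = (\<Sum>j<k. (n - 2*j) * occ i (hook n k j))"
  by (simp add: hooks_def total_occ_sum)

lemma total_occ_hooks_low: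
  assumes "2 * k \<le> n" "2 * i \<le> n"
  shows "total_occ i (hooks n k) = (n - k + 1) * (if i < k then n else 2 * k)"
proof -
  have "total_occ i (hooks n k)
      = (\<Sum>j<k. if j = i then (n - 2*j) * (n - k + 1) else 0)
        + (\<Sum>j<k. (n - 2*j) * (of_bool (k \<le> i + j) + of_bool (j < i)))"
    unfolding total_occ_hooks_eq sum.distrib[symmetric]
    by (rule sum.cong) (auto simp: occ_hook_low assms distrib_left)
  also have "\<dots> = (if i < k then (n - 2*i) * (n - k + 1) else 0) + 2 * (n - k + 1) * min i k"
    by (simp only: hook_weights_pairing[OF assms(1)] sum.delta finite_lessThan lessThan_iff)
  also have "\<dots> = (n - k + 1) * (if i < k then (n - 2*i) + 2*i else 2 * k)"
    by (simp add: min_def distrib_left)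
  also have "\<dots> = (n - k + 1) * (if i < k then n else 2 * k)"
    using assms by simp
  finally show ?thesis .
qed

lemma total_occ_hooks:
  assumes "2 * k \<le> n" "i \<le> n"
  shows "total_occ i (hooks n k) = (n - k + 1) * (if k \<le> i \<and> i \<le> n - k then 2 * k else n)"
proof (cases "2 * i \<le> n")
  case True
  then show ?thesis
    using assms total_occ_hooks_low[OF assms(1) True] by auto
next
  case False
  have "total_occ i (hooks n k) = total_occ (n - i) (hooks n k)"
    unfolding total_occ_hooks_eq using assms by (simp add: occ_hook_reflect)
  also have "\<dots> = (n - k + 1) * (if n - i < k then n else 2 * k)"
    by (rule total_occ_hooks_low) (use assms False in auto)
  finally show ?thesis
    using assms False by auto
qed

definition diagonal :: "nat \<Rightarrow> (nat \<times> nat) set" where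
  "diagonal n = (\<lambda>d. (d div 2, d - d div 2)) ` {0..2*n}"

lemma diagonal_section:
  fixes n d :: nat
  shows "d \<in> {0..2*n-0} \<Longrightarrow> d div 2 \<le> d - d div 2 \<and> d - d div 2 \<le> n \<and> d div 2 + (d - d div 2) = d"
  by auto

lemma diagonal_basis: "quad_mon_basis n 0 (diagonal n)"
  using section_basis(1)[of 0 n "\<lambda>d. (d div 2, d - d div 2)"] diagonal_section
  by (simp add: diagonal_def)

lemma sum_occ_diagonal:
  "(\<Sum>d\<in>{0..2*n}. var_occ i (d div 2, d - d div 2))
     = (if i \<le> n then 2 + of_bool (0 < i) + of_bool (i < n) else 0)"
proof (induction n)
  case 0
  then show ?case by (simp add: var_occ_def)
next
  case (Suc n)
  have top: "2 * Suc n = Suc (Suc (2 * n))" "Suc (2 * n) div 2 = n" "Suc (Suc (2 * n)) div 2 = Suc n"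
    by simp_all
  show ?case
    unfolding top sum.atLeast0_atMost_Suc Suc.IH by (auto simp: var_occ_def)
qed

lemma occ_diagonal: "i \<le> n \<Longrightarrow> occ i (diagonal n) = 2 + of_bool (0 < i) + of_bool (i < n)"
  using section_basis(2)[of 0 n "\<lambda>d. (d div 2, d - d div 2)"] diagonal_section sum_occ_diagonal
  by (simp add: diagonal_def)

definition balanced_family :: "nat \<Rightarrow> nat \<Rightarrow> nat \<Rightarrow> (nat \<times> nat) set multiset \<Rightarrow> bool" where
  "balanced_family n k t M \<longleftrightarrow>
     0 < t \<and> (\<forall>B\<in>#M. quad_mon_basis n k B) \<and> (\<forall>i\<le>n. total_occ i M = t)"

lemma total_occ_beyond:
  assumes bases: "\<forall>B\<in>#M. quad_mon_basis N K B" and "N < i"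
  shows "total_occ i M = 0"
proof -
  have "var_occ i p = 0" if "B \<in># M" "p \<in> B" for B p
    using quad_mon_basis_elem[of N K B p] bases that \<open>N < i\<close> by (simp add: var_occ_def)
  then have "occ i B = 0" if "B \<in># M" for B
    using that by (simp add: occ_def)
  then show ?thesis
    by (simp add: total_occ_eq)
qed

lemma balanced_family_occ:
  assumes "balanced_family N K t M"
  shows "total_occ i M = t * of_bool (i \<le> N)"
proof (cases "i \<le> N")
  case True
  then show ?thesis
    using assms by (simp add: balanced_family_def)
next
  case False
  then show ?thesis
    using assms total_occ_beyond[of M N K i] by (simp add: balanced_family_def)
qed

definition lift :: "nat \<Rightarrow> (nat \<times> nat) set multiset \<Rightarrow> (nat \<times> nat) set multiset" where
  "lift c M = image_mset ((`) (\<lambda>p. (fst p, snd p + c))) M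
             + image_mset ((`) (\<lambda>p. sort2 (snd p, fst p + c))) M"

lemma var_occ_lift:
  "var_occ i (a, b + c) + var_occ i (b, a + c) = var_occ i (a, b) + of_bool (c \<le> i) * var_occ (i - c) (a, b)"
  by (auto simp: var_occ_def)

lemma lift_pair_bases:
  assumes B: "quad_mon_basis N K B" and KN: "K \<le> N"
  shows "quad_mon_basis (N + c) (K + c) ((\<lambda>p. (fst p, snd p + c)) ` B)"
    and "quad_mon_basis (N + c) (K + c) ((\<lambda>p. sort2 (snd p, fst p + c)) ` B)"
    and "occ i ((\<lambda>p. (fst p, snd p + c)) ` B) + occ i ((\<lambda>p. sort2 (snd p, fst p + c)) ` B)
           = occ i B + of_bool (c \<le> i) * occ (i - c) B"
proof -
  have g1: "fst (fst p, snd p + c) \<le> snd (fst p, snd p + c) \<and> snd (fst p, snd p + c) \<le> N + c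
      \<and> fst (fst p, snd p + c) + snd (fst p, snd p + c) = fst p + snd p + c" if "p \<in> B" for p
    using quad_mon_basis_elem[OF B that] by auto
  have g2: "fst (sort2 (snd p, fst p + c)) \<le> snd (sort2 (snd p, fst p + c))
      \<and> snd (sort2 (snd p, fst p + c)) \<le> N + c
      \<and> fst (sort2 (snd p, fst p + c)) + snd (sort2 (snd p, fst p + c)) = fst p + snd p + c"
    if "p \<in> B" for p
    using quad_mon_basis_elem[OF B that] by (auto simp: sort2_def)
  note shift1 = shifted_basis[where g = "\<lambda>p. (fst p, snd p + c)", OF B KN g1]
    and shift2 = shifted_basis[where g = "\<lambda>p. sort2 (snd p, fst p + c)", OF B KN g2]
  show "quad_mon_basis (N + c) (K + c) ((\<lambda>p. (fst p, snd p + c)) ` B)"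
    by (rule shift1(1))
  show "quad_mon_basis (N + c) (K + c) ((\<lambda>p. sort2 (snd p, fst p + c)) ` B)"
    by (rule shift2(1))
  have "occ i ((\<lambda>p. (fst p, snd p + c)) ` B) + occ i ((\<lambda>p. sort2 (snd p, fst p + c)) ` B)
      = (\<Sum>p\<in>B. var_occ i (fst p, snd p + c) + var_occ i (snd p, fst p + c))"
    using shift1(2)[of i] shift2(2)[of i] by (simp add: sum.distrib)
  also have "\<dots> = (\<Sum>p\<in>B. var_occ i p + of_bool (c \<le> i) * var_occ (i - c) p)"
    using var_occ_lift by simp
  also have "\<dots> = occ i B + of_bool (c \<le> i) * occ (i - c) B"
    by (simp add: occ_def sum.distrib sum_distrib_left)
  finally show "occ i ((\<lambda>p. (fst p, snd p + c)) ` B) + occ i ((\<lambda>p. sort2 (snd p, fst p + c)) ` B)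
           = occ i B + of_bool (c \<le> i) * occ (i - c) B" .
qed

lemma lift_bases:
  "\<forall>B\<in>#M. quad_mon_basis N K B \<Longrightarrow> K \<le> N \<Longrightarrow> \<forall>B\<in>#lift c M. quad_mon_basis (N + c) (K + c) B"
  by (auto simp: lift_def lift_pair_bases)

lemma total_occ_lift:
  "\<forall>B\<in>#M. quad_mon_basis N K B \<Longrightarrow> K \<le> N \<Longrightarrow>
     total_occ i (lift c M) = total_occ i M + of_bool (c \<le> i) * total_occ (i - c) M"
proof (induction M)
  case empty
  then show ?case by (simp add: lift_def)
next
  case (add B M)
  have "quad_mon_basis N K B"
    using add.prems by simp
  from lift_pair_bases(3)[OF this \<open>K \<le> N\<close>, where c = c and i = i]
  show ?case
    using add by (simp add: lift_def distrib_left)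
qed

lemma lift_balanced:
  assumes "balanced_family N K t M" "K \<le> N"
  shows "\<forall>B\<in>#lift c M. quad_mon_basis (N + c) (K + c) B"
    and "total_occ i (lift c M) = t * (of_bool (i \<le> N) + of_bool (c \<le> i \<and> i \<le> N + c))"
proof -
  have bases: "\<forall>B\<in>#M. quad_mon_basis N K B"
    using assms(1) by (simp add: balanced_family_def)
  show "\<forall>B\<in>#lift c M. quad_mon_basis (N + c) (K + c) B"
    using lift_bases[OF bases assms(2)] .
  show "total_occ i (lift c M) = t * (of_bool (i \<le> N) + of_bool (c \<le> i \<and> i \<le> N + c))"
  proof -
    have "of_bool (c \<le> i) * (t * of_bool (i - c \<le> N)) = t * of_bool (c \<le> i \<and> i \<le> N + c)"
      by (cases "c \<le> i") auto
    then show ?thesis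
      unfolding total_occ_lift[OF bases assms(2)] balanced_family_occ[OF assms(1)]
      by (simp add: distrib_left)
  qed
qed

lemma balanced_family_nonempty: "balanced_family n k t M \<Longrightarrow> M \<noteq> {#}"
  using balanced_family_occ[of n k t M 0] by (auto simp: balanced_family_def)

lemma balanced_Z0:
  "balanced_family n 0 (4 * n + 2) (add_mset (hook n 0 0) (replicate_mset n (diagonal n)))"
proof -
  have "occ i (hook n 0 0) + n * occ i (diagonal n) = 4 * n + 2" if "i \<le> n" for i
  proof -
    have "occ i (hook n 0 0) = (n + 1) * of_bool (i = 0) + 1 + of_bool (0 < i) + n * of_bool (i = n)"
      using that by (simp add: occ_hook)
    moreover have "occ i (diagonal n) = 2 + of_bool (0 < i) + of_bool (i < n)"
      using that by (rule occ_diagonal)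
    ultimately show ?thesis
      using that by (cases "i = 0"; cases "i = n") (simp_all add: algebra_simps)
  qed
  then show ?thesis
    by (auto simp: balanced_family_def hook_basis diagonal_basis)
qed

lemma balanced_wide:
  assumes "1 \<le> k" and wide: "2 * k \<le> n" and M: "balanced_family (n - k) 0 t M"
  shows "balanced_family n k (2 * (n - k) * (n - k + 1) * t)
           (repeat_mset t (hooks n k) + repeat_mset ((n - k + 1) * (n - 2 * k)) (lift k M))"
proof -
  obtain a where n: "n = 2 * k + a"
    using wide le_Suc_ex by blast
  have lifted: "\<forall>B\<in>#lift k M. quad_mon_basis n k B"
    using lift_balanced(1)[OF M, of k] wide by simp
  have count: "t * total_occ i (hooks n k) + (n - k + 1) * (n - 2 * k) * total_occ i (lift k M)
      = 2 * (n - k) * (n - k + 1) * t" if "i \<le> n" for i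
  proof (cases "k \<le> i \<and> i \<le> n - k")
    case True
    then have "total_occ i (lift k M) = 2 * t"
      unfolding lift_balanced(2)[OF M le0] using that wide by auto
    then show ?thesis
      unfolding total_occ_hooks[OF wide that] if_P[OF True] by (simp add: n algebra_simps)
  next
    case False
    then have "total_occ i (lift k M) = t"
      unfolding lift_balanced(2)[OF M le0] using that wide by auto
    then show ?thesis
      unfolding total_occ_hooks[OF wide that] if_not_P[OF False] by (simp add: n algebra_simps)
  qed
  show ?thesis
    using M \<open>1 \<le> k\<close> wide count lifted hooks_bases
    by (auto simp: balanced_family_def)
qed

(* The case 2k > n: two lifted families whose coverages are complementary. *)
lemma balanced_narrow:
  assumes narrow: "n < 2 * k" and kn: "k \<le> n"
    and M1: "balanced_family (n - k) 0 t1 M1"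
    and M2: "balanced_family (k - 1) (2 * k - n - 1) t2 M2"
  shows "balanced_family n k (2 * t1 * t2)
           (repeat_mset t2 (lift k M1) + repeat_mset t1 (lift (n - k + 1) M2))"
proof -
  have lifted1: "\<forall>B\<in>#lift k M1. quad_mon_basis n k B"
    using lift_balanced(1)[OF M1, of k] kn by simp
  have lifted2: "\<forall>B\<in>#lift (n - k + 1) M2. quad_mon_basis n k B"
    using lift_balanced(1)[OF M2, of "n - k + 1"] narrow kn by simp
  have K2: "2 * k - n - 1 \<le> k - 1"
    using kn by simp
  have count: "t2 * total_occ i (lift k M1) + t1 * total_occ i (lift (n - k + 1) M2) = 2 * t1 * t2"
    if "i \<le> n" for i
  proof -
    have covered: "(of_bool (i \<le> n - k) + of_bool (k \<le> i \<and> i \<le> n - k + k))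
        + (of_bool (i \<le> k - 1) + of_bool (n - k + 1 \<le> i \<and> i \<le> k - 1 + (n - k + 1))) = (2::nat)"
      using that narrow kn by auto
    have "t2 * total_occ i (lift k M1) + t1 * total_occ i (lift (n - k + 1) M2)
        = t1 * t2 * ((of_bool (i \<le> n - k) + of_bool (k \<le> i \<and> i \<le> n - k + k))
            + (of_bool (i \<le> k - 1) + of_bool (n - k + 1 \<le> i \<and> i \<le> k - 1 + (n - k + 1))))"
      unfolding lift_balanced(2)[OF M1 le0] lift_balanced(2)[OF M2 K2]
      by (simp only: algebra_simps)
    then show ?thesis
      unfolding covered by simp
  qed
  show ?thesis
    using M1 M2 count lifted1 lifted2
    by (auto simp: balanced_family_def)
qed

lemma balanced_family_exists: "k \<le> n \<Longrightarrow> \<exists>t M. balanced_family n k t M"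
proof (induction n arbitrary: k rule: less_induct)
  case (less n)
  consider "k = 0" | "1 \<le> k" "2 * k \<le> n" | "n < 2 * k"
    by linarith
  then show ?case
  proof cases
    case 1
    then show ?thesis
      using balanced_Z0 by blast
  next
    case 2
    obtain t M where "balanced_family (n - k) 0 t M"
      using less.IH[of "n - k" 0] 2 by auto
    then show ?thesis
      using balanced_wide 2 by blast
  next
    case 3
    then have "n - k < n" "k - 1 < n" "2 * k - n - 1 \<le> k - 1"
      using less.prems by linarith+
    obtain t1 M1 where "balanced_family (n - k) 0 t1 M1"
      using less.IH[OF \<open>n - k < n\<close>, of 0] by auto
    moreover obtain t2 M2 where "balanced_family (k - 1) (2 * k - n - 1) t2 M2"
      using less.IH[OF \<open>k - 1 < n\<close> \<open>2 * k - n - 1 \<le> k - 1\<close>] by auto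
    ultimately show ?thesis
      using balanced_narrow 3 less.prems by blast
  qed
qed

theorem proposition6p7:
  fixes n k :: nat
  assumes "n \<ge> 1" and "k \<le> n"
  shows "\<exists>M :: (nat \<times> nat) set multiset.
           M \<noteq> {#} \<and> (\<forall>B \<in># M. quad_mon_basis n k B) \<and> X_balanced n M"
proof -
  obtain t M where M: "balanced_family n k t M"
    using balanced_family_exists[OF assms(2)] by blast
  have "M \<noteq> {#}"
    using balanced_family_nonempty[OF M] .
  moreover have "\<forall>B \<in># M. quad_mon_basis n k B" and "X_balanced n M"
    using M by (simp_all add: balanced_family_def X_balanced_def)
  ultimately show ?thesis
    by blast
qed

end
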